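(* Let $N\ge1$, $V=\{1,\dots,N\}$, $A$ an $N\times N$ row-stochastic matrix, and $\sigma_1,\sigma_2,\dots$ random variables with values in $2^V$. Consider $x(k+1)=A_{\sigma_k}x(k)$, $k\ge1$, with deterministic $x(1)\in\mathbb R^N$. Suppose: (a) $\mathcal G(A)$ is rooted and some root $r\in\mathbbm r(A)$ has a self-loop, i.e. $a_{rr}>0$. (b) There exists $\alpha>0$ such that whenever $\mathbb P(\sigma_k\mid\sigma_{k-1},\dots,\sigma_1)\neq0$, it is $\ge\alpha$. (c) There exists $q>0$ such that for every $k\ge1$ and every given value of $(\sigma_{k-1},\dots,\sigma_1)$, $\bigcup_{w=0}^{q-1}\bigcup_{\sigma\in\mathscr I_{\sigma_{(k-1):1}}(w)}\sigma=V$, where $\mathscr I_{\sigma_{(k-1):1}}(w)=\{\sigma:\mathbb P(\sigma_{k+w}=\sigma\mid\sigma_{k-1},\dots,\sigma_1)\neq0\}$. Then the iteration reaches consensus almost surely.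
   Context: $\mathcal G(A)$ is the directed graph on $V$ with an edge $(j,i)$ iff $a_{ij}>0$; it is rooted if some node $r$ has a directed path to every other node, and $\mathbbm r(A)$ is the set of such roots. For $\sigma\subseteq V$, $A_\sigma$ is the matrix whose $j$-th row equals the $j$-th row of $A$ if $j\in\sigma$ and $e_j^T$ otherwise. For $k=1$ conditional probabilities given the empty past are unconditional. The iteration reaches consensus almost surely if for every $\varepsilon>0$ and every $x(1)$, $\lim_{k\to\infty}\mathbb P\big(\sum_{j=1}^N (x_j(k)-\frac1N\sum_{i=1}^N x_i(k))^2\ge\varepsilon\big)=0$. *)

theory Defs
  imports "HOL-Probability.Probability"
begin

definition row_stochastic :: "real^'n^'n \<Rightarrow> bool" where
  "row_stochastic A \<longleftrightarrow> (\<forall>i j. A$i$j \<ge> 0) \<and> (\<forall>i. (\<Sum>j\<in>UNIV. A$i$j) = 1)"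

definition graph_edges :: "real^'n^'n \<Rightarrow> ('n \<times> 'n) set" where
  "graph_edges A = {(j, i). A$i$j > 0}"

definition roots :: "real^'n^'n \<Rightarrow> 'n set" where
  "roots A = {r. \<forall>i. i \<noteq> r \<longrightarrow> (r, i) \<in> (graph_edges A)\<^sup>+}"

definition rooted :: "real^'n^'n \<Rightarrow> bool" where
  "rooted A \<longleftrightarrow> roots A \<noteq> {}"

definition sub_mat :: "real^'n^'n \<Rightarrow> 'n set \<Rightarrow> real^'n^'n" where
  "sub_mat A s = (\<chi> j. if j \<in> s then A$j else axis j 1)"

definition past_event :: "'a measure \<Rightarrow> (nat \<Rightarrow> 'a \<Rightarrow> 'n set) \<Rightarrow> nat \<Rightarrow> (nat \<Rightarrow> 'n set) \<Rightarrow> 'a set" where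
  "past_event M \<sigma> k h = {\<omega> \<in> space M. \<forall>i\<in>{1..<k}. \<sigma> i \<omega> = h i}"

definition cond_prob :: "'a measure \<Rightarrow> (nat \<Rightarrow> 'a \<Rightarrow> 'n set) \<Rightarrow> nat \<Rightarrow> (nat \<Rightarrow> 'n set) \<Rightarrow> nat \<Rightarrow> 'n set \<Rightarrow> real" where
  "cond_prob M \<sigma> k h m s =
     measure M {\<omega> \<in> past_event M \<sigma> k h. \<sigma> m \<omega> = s} / measure M (past_event M \<sigma> k h)"

text \<open>Trajectory: traj A sigma x1 k = x(k+1); x(1) = x1, x(k+1) = A_{sigma_k} x(k).\<close>
primrec traj :: "real^'n^'n \<Rightarrow> (nat \<Rightarrow> 'a \<Rightarrow> 'n set) \<Rightarrow> real^'n \<Rightarrow> nat \<Rightarrow> 'a \<Rightarrow> real^'n" where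
  "traj A \<sigma> x1 0 \<omega> = x1"
| "traj A \<sigma> x1 (Suc k) \<omega> = sub_mat A (\<sigma> (Suc k) \<omega>) *v traj A \<sigma> x1 k \<omega>"

definition disagreement :: "real^'n \<Rightarrow> real" where
  "disagreement x = (\<Sum>j\<in>UNIV. (x$j - (\<Sum>i\<in>UNIV. x$i) / real CARD('n))^2)"

end

theory Submission
  imports Defs
begin

text \<open>The spread max_i x_i - min_i x_i never increases under a stochastic update. If the value
  at the root r, which its self-loop keeps alive, propagates along the edges of G(A) to every node
  during L = N q steps, then every entry puts weight at least a^L on it, where a is the least positive
  entry of A, and the spread shrinks by the factor 1 - a^L. By (c), from every history of positive
  probability some continuation of length L does this, and by (b) that continuation has conditional
  probability at least min(\<alpha>,1)^L. Hence the expected spread decays geometrically, and Markov's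
  inequality together with disagreement \<le> N spread^2 yields consensus.\<close>

section \<open>Switched averaging along a fixed sequence\<close>

lemma sub_mat_mult_vec_nth:
  "(sub_mat A s *v y) $ i = (if i \<in> s then (\<Sum>j\<in>UNIV. A$i$j * y$j) else y$i)"
proof (cases "i \<in> s")
  case False
  have "(\<Sum>j\<in>UNIV. axis i 1 $ j * y$j) = (\<Sum>j\<in>UNIV. if j = i then y$j else 0)"
    by (rule sum.cong) (auto simp: axis_def)
  then show ?thesis using False by (simp add: sub_mat_def matrix_vector_mult_def)
qed (simp add: sub_mat_def matrix_vector_mult_def)

lemma row_stochastic_nonneg: "row_stochastic A \<Longrightarrow> 0 \<le> A$i$j"
  by (simp add: row_stochastic_def)

lemma row_stochastic_le_one:
  assumes "row_stochastic A" shows "A$i$j \<le> 1"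
proof -
  have "A$i$j \<le> (\<Sum>k\<in>UNIV. A$i$k)"
    using assms by (intro member_le_sum) (auto simp: row_stochastic_def)
  then show ?thesis using assms by (simp add: row_stochastic_def)
qed

lemma row_stochastic_sum_diff:
  assumes "row_stochastic A"
  shows "(\<Sum>j\<in>UNIV. A$i$j * y$j) - m = (\<Sum>j\<in>UNIV. A$i$j * (y$j - m))"
proof -
  have "(\<Sum>j\<in>UNIV. A$i$j * (y$j - m)) = (\<Sum>j\<in>UNIV. A$i$j * y$j) - (\<Sum>j\<in>UNIV. A$i$j) * m"
    by (simp add: right_diff_distrib sum_subtractf sum_distrib_right)
  then show ?thesis using assms by (simp add: row_stochastic_def)
qed

definition min_pos_entry :: "real^'n^'n \<Rightarrow> real" where
  "min_pos_entry A = Min {A$i$j |i j. A$i$j > 0}"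

lemma
  assumes "A$i$j > 0"
  shows min_pos_entry_le: "min_pos_entry A \<le> A$i$j"
    and min_pos_entry_pos: "min_pos_entry A > 0"
proof -
  let ?S = "{A$i$j |i j. A$i$j > 0}"
  have fin: "finite ?S"
    by (rule finite_subset[of _ "(\<lambda>(i,j). A$i$j) ` UNIV"]) auto
  show "min_pos_entry A \<le> A$i$j"
    unfolding min_pos_entry_def using fin assms by (intro Min_le) auto
  have "min_pos_entry A \<in> ?S"
    unfolding min_pos_entry_def using fin assms by (intro Min_in) auto
  then show "min_pos_entry A > 0" by auto
qed

lemma min_pos_entry_le_one: "row_stochastic A \<Longrightarrow> A$i$j > 0 \<Longrightarrow> min_pos_entry A \<le> 1"
  using min_pos_entry_le row_stochastic_le_one order_trans by blast

primrec run :: "real^'n^'n \<Rightarrow> (nat \<Rightarrow> 'n set) \<Rightarrow> real^'n \<Rightarrow> nat \<Rightarrow> real^'n" where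
  "run A g y 0 = y"
| "run A g y (Suc t) = sub_mat A (g (Suc t)) *v run A g y t"

lemma traj_eq_run: "traj A \<sigma> x1 k \<omega> = run A (\<lambda>i. \<sigma> i \<omega>) x1 k"
  by (induction k) simp_all

lemma run_add: "run A g y (k + t) = run A (\<lambda>i. g (k + i)) (run A g y k) t"
  by (induction t) simp_all

lemma run_cong: "(\<And>i. 1 \<le> i \<Longrightarrow> i \<le> t \<Longrightarrow> g i = g' i) \<Longrightarrow> run A g y t = run A g' y t"
  by (induction t) simp_all

lemma run_uminus: "run A g (- y) t = - run A g y t"
  by (induction t) (auto simp: vec_eq_iff sub_mat_mult_vec_nth sum_negf)

text \<open>The nodes whose state depends on the initial value at r after the first t switches.\<close>
primrec reach :: "real^'n^'n \<Rightarrow> 'n \<Rightarrow> (nat \<Rightarrow> 'n set) \<Rightarrow> nat \<Rightarrow> 'n set" where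
  "reach A r g 0 = {r}"
| "reach A r g (Suc t) = reach A r g t \<union> {i \<in> g (Suc t). \<exists>j\<in>reach A r g t. A$i$j > 0}"

lemma reach_mono: "t \<le> t' \<Longrightarrow> reach A r g t \<subseteq> reach A r g t'"
  by (induction t' rule: dec_induct) auto

lemma root_in_reach: "r \<in> reach A r g t"
  using reach_mono[of 0 t] by auto

lemma reach_cong: "(\<And>i. 1 \<le> i \<Longrightarrow> i \<le> t \<Longrightarrow> g i = g' i) \<Longrightarrow> reach A r g t = reach A r g' t"
  by (induction t) simp_all

lemma reach_in_neighbour:
  "A$r$r > 0 \<Longrightarrow> i \<in> reach A r g t \<Longrightarrow> \<exists>j\<in>reach A r g t. A$i$j > 0"
proof (induction t arbitrary: i)
  case (Suc t)
  then show ?case using reach_mono[of t "Suc t"] by fastforce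
qed auto

lemma root_edge_leaving:
  assumes "r \<in> roots A" "r \<in> R" "R \<noteq> UNIV"
  shows "\<exists>i j. i \<notin> R \<and> j \<in> R \<and> A$i$j > 0"
proof -
  have "(r, u) \<in> (graph_edges A)\<^sup>+ \<Longrightarrow> u \<notin> R \<Longrightarrow> \<exists>i j. i \<notin> R \<and> j \<in> R \<and> A$i$j > 0" for u
  proof (induction rule: trancl_induct)
    case (base u)
    then show ?case using assms(2) by (auto simp: graph_edges_def)
  next
    case (step v u)
    then show ?case by (cases "v \<in> R") (auto simp: graph_edges_def)
  qed
  moreover obtain u where "u \<notin> R" using assms(3) by auto
  moreover have "u \<noteq> r" using assms(2) \<open>u \<notin> R\<close> by auto
  ultimately show ?thesis using assms(1) unfolding roots_def by blast
qed

lemma run_ge: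
  assumes "row_stochastic A" and "\<And>i. m \<le> y$i"
  shows "m \<le> run A g y t $ i"
proof (induction t arbitrary: i)
  case (Suc t)
  let ?z = "run A g y t"
  have "0 \<le> (\<Sum>j\<in>UNIV. A$i$j * (?z$j - m))"
    using Suc row_stochastic_nonneg[OF assms(1)] by (intro sum_nonneg) simp
  then show ?case
    using Suc row_stochastic_sum_diff[OF assms(1), of i ?z m] by (simp add: sub_mat_mult_vec_nth)
qed (use assms in simp)

lemma run_reach_ge:
  fixes A :: "real^'n^'n"
  assumes rs: "row_stochastic A" and loop: "A$r$r > 0" and ym: "\<And>i. m \<le> y$i"
  shows "i \<in> reach A r g t \<Longrightarrow> min_pos_entry A ^ t * (y$r - m) \<le> run A g y t $ i - m"
proof (induction t arbitrary: i)
  case (Suc t)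
  let ?a = "min_pos_entry A" and ?z = "run A g y t"
  have a: "0 < ?a" "?a \<le> 1"
    using min_pos_entry_pos[OF loop] min_pos_entry_le_one[OF rs loop] by auto
  have yr: "0 \<le> y$r - m" using ym by simp
  have lb: "A$i$j * (?z$j - m) \<le> (\<Sum>j\<in>UNIV. A$i$j * ?z$j) - m" for j
  proof -
    have "A$i$j * (?z$j - m) \<le> (\<Sum>j\<in>UNIV. A$i$j * (?z$j - m))"
      using run_ge[OF rs ym] row_stochastic_nonneg[OF rs] by (intro member_le_sum) auto
    then show ?thesis using row_stochastic_sum_diff[OF rs] by simp
  qed
  show ?case
  proof (cases "i \<in> g (Suc t)")
    case True
    have "i \<in> reach A r g t \<or> (\<exists>j\<in>reach A r g t. A$i$j > 0)" using Suc.prems by auto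
    then obtain j where j: "j \<in> reach A r g t" "A$i$j > 0"
      using reach_in_neighbour[OF loop] by blast
    have "?a ^ Suc t * (y$r - m) = ?a * (?a ^ t * (y$r - m))" by simp
    also have "\<dots> \<le> A$i$j * (?z$j - m)"
      using Suc.IH[OF j(1)] min_pos_entry_le[OF j(2)] a yr by (intro mult_mono) auto
    also have "\<dots> \<le> run A g y (Suc t) $ i - m"
      using lb True by (simp add: sub_mat_mult_vec_nth)
    finally show ?thesis .
  next
    case False
    then have "?a ^ t * (y$r - m) \<le> ?z$i - m" using Suc by simp
    moreover have "?a ^ Suc t * (y$r - m) \<le> ?a ^ t * (y$r - m)"
      using a yr by (simp add: mult_right_mono power_le_one mult_left_le_one_le)
    ultimately show ?thesis using False by (simp add: sub_mat_mult_vec_nth)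
  qed
qed simp

definition spread :: "real^'n \<Rightarrow> real" where
  "spread y = Max (range (($) y)) - Min (range (($) y))"

lemma spread_nonneg: "0 \<le> spread y"
proof -
  have "Min (range (($) y)) \<le> y$i" "y$i \<le> Max (range (($) y))" for i by simp_all
  then show ?thesis unfolding spread_def by (meson diff_ge_0_iff_ge order_trans)
qed

lemma spread_le:
  assumes "\<And>i. m \<le> y$i" "\<And>i. y$i \<le> u" shows "spread y \<le> u - m"
proof -
  have "Max (range (($) y)) \<le> u" "m \<le> Min (range (($) y))"
    using assms by (simp_all add: Max_le_iff Min_ge_iff)
  then show ?thesis unfolding spread_def by linarith
qed

lemma disagreement_le_spread: "disagreement (y::real^'n) \<le> real CARD('n) * (spread y)^2"
proof -
  let ?mx = "Max (range (($) y))" and ?mn = "Min (range (($) y))"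
  let ?mean = "(\<Sum>i\<in>UNIV. y$i) / real CARD('n)"
  have N: "real CARD('n) > 0" by simp
  have "(\<Sum>i::'n\<in>UNIV. ?mn) \<le> (\<Sum>i\<in>UNIV. y$i)" by (intro sum_mono) simp
  then have lo: "?mn \<le> ?mean" using N by (simp add: pos_le_divide_eq mult.commute)
  have "(\<Sum>i\<in>UNIV. y$i) \<le> (\<Sum>i::'n\<in>UNIV. ?mx)" by (intro sum_mono) simp
  then have hi: "?mean \<le> ?mx" using N by (simp add: pos_divide_le_eq mult.commute)
  have "(y$j - ?mean)^2 \<le> (spread y)^2" for j
  proof -
    have "?mn \<le> y$j" "y$j \<le> ?mx" by simp_all
    then have "\<bar>y$j - ?mean\<bar> \<le> spread y"
      using lo hi unfolding spread_def by linarith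
    then have "\<bar>y$j - ?mean\<bar>^2 \<le> (spread y)^2" by (intro power_mono) auto
    then show ?thesis by simp
  qed
  then have "disagreement y \<le> (\<Sum>j::'n\<in>UNIV. (spread y)^2)"
    unfolding disagreement_def by (intro sum_mono) auto
  then show ?thesis by simp
qed

lemma run_le:
  assumes "row_stochastic A" and "\<And>i. y$i \<le> u"
  shows "run A g y t $ i \<le> u"
  using run_ge[OF assms(1), of "-u" "-y" g t i] assms(2) by (simp add: run_uminus)

lemma run_reach_le:
  fixes A :: "real^'n^'n"
  assumes "row_stochastic A" and "A$r$r > 0" and "\<And>i. y$i \<le> u" and "i \<in> reach A r g t"
  shows "run A g y t $ i \<le> u - min_pos_entry A ^ t * (u - y$r)"
  using run_reach_ge[OF assms(1,2), of "-u" "-y" i g t] assms(3,4)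
  by (simp add: run_uminus algebra_simps)

lemma run_spread_le:
  assumes "row_stochastic A"
  shows "spread (run A g y t) \<le> spread y"
  unfolding spread_def[of y]
  by (intro spread_le run_ge run_le assms) simp_all

lemma run_spread_contract:
  fixes A :: "real^'n^'n"
  assumes rs: "row_stochastic A" and loop: "A$r$r > 0" and all: "reach A r g t = UNIV"
  shows "spread (run A g y t) \<le> (1 - min_pos_entry A ^ t) * spread y"
proof -
  let ?a = "min_pos_entry A ^ t"
  define m where "m = Min (range (($) y))"
  define u where "u = Max (range (($) y))"
  have "spread (run A g y t) \<le> (u - ?a * (u - y$r)) - (m + ?a * (y$r - m))"
  proof (rule spread_le)
    show "m + ?a * (y$r - m) \<le> run A g y t $ i" for i
      using run_reach_ge[OF rs loop, of m y i g t] all by (simp add: m_def)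
    show "run A g y t $ i \<le> u - ?a * (u - y$r)" for i
      using run_reach_le[OF rs loop, of y u i g t] all by (simp add: u_def)
  qed
  also have "\<dots> = (1 - ?a) * spread y"
    unfolding spread_def m_def[symmetric] u_def[symmetric] by (simp add: algebra_simps)
  finally show ?thesis .
qed

section \<open>Histories of the switching process\<close>

text \<open>Histories are extensional outside {1..n}, so that there are finitely many of them and
  distinct ones describe disjoint events.\<close>
definition histories :: "nat \<Rightarrow> (nat \<Rightarrow> 'n set) set" where
  "histories n = PiE {1..n} (\<lambda>_. UNIV)"

definition extensions :: "nat \<Rightarrow> nat \<Rightarrow> (nat \<Rightarrow> 'n set) \<Rightarrow> (nat \<Rightarrow> 'n set) set" where
  "extensions k d h = {h' \<in> histories (k + d). restrict h' {1..k} = h}"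

lemma finite_histories: "finite (histories n :: (nat \<Rightarrow> 'n::finite set) set)"
  unfolding histories_def by (intro finite_PiE) auto

lemma histories_eqI:
  "h \<in> histories n \<Longrightarrow> h' \<in> histories n \<Longrightarrow> (\<And>i. i \<in> {1..n} \<Longrightarrow> h i = h' i) \<Longrightarrow> h = h'"
  unfolding histories_def by (rule PiE_ext) auto

lemma restrict_in_histories: "restrict h {1..n} \<in> histories n"
  by (simp add: histories_def)

lemma finite_extensions: "finite (extensions k d (h :: nat \<Rightarrow> 'n::finite set))"
  unfolding extensions_def by (rule finite_subset[OF _ finite_histories]) auto

lemma extensions_agree: "h' \<in> extensions k d h \<Longrightarrow> i \<in> {1..k} \<Longrightarrow> h' i = h i"
  unfolding extensions_def by (metis (mono_tags, lifting) mem_Collect_eq restrict_apply')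

lemma restrict_in_extensions:
  assumes "h \<in> histories k" "\<And>i. i \<in> {1..k} \<Longrightarrow> h' i = h i"
  shows "restrict h' {1..k + d} \<in> extensions k d h"
proof -
  have "restrict (restrict h' {1..k + d}) {1..k} = h"
    by (rule histories_eqI[OF restrict_in_histories assms(1)]) (use assms(2) in auto)
  then show ?thesis unfolding extensions_def using restrict_in_histories by blast
qed

locale switched_consensus = prob_space M for M :: "'a measure" +
  fixes A :: "real^'n^'n" and \<sigma> :: "nat \<Rightarrow> 'a \<Rightarrow> 'n set" and \<alpha> :: real and q :: nat and r :: 'n
  assumes measurable_switch: "\<And>k. k \<ge> 1 \<Longrightarrow> \<sigma> k \<in> M \<rightarrow>\<^sub>M count_space UNIV"
    and row_stochastic: "row_stochastic A"
    and root: "r \<in> roots A" and root_loop: "A$r$r > 0"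
    and alpha_pos: "\<alpha> > 0"
    and cond_prob_ge: "\<forall>k\<ge>1. \<forall>h s. cond_prob M \<sigma> k h k s \<noteq> 0 \<longrightarrow> cond_prob M \<sigma> k h k s \<ge> \<alpha>"
    and q_pos: "q > 0"
    and all_switched_within_q: "\<forall>k\<ge>1. \<forall>h. measure M (past_event M \<sigma> k h) \<noteq> 0 \<longrightarrow>
           (\<Union>w\<in>{0..<q}. \<Union>{s. cond_prob M \<sigma> k h (k + w) s \<noteq> 0}) = UNIV"
begin

definition hist_event :: "nat \<Rightarrow> (nat \<Rightarrow> 'n set) \<Rightarrow> 'a set" where
  "hist_event k h = past_event M \<sigma> (Suc k) h"

definition hist_prob :: "nat \<Rightarrow> (nat \<Rightarrow> 'n set) \<Rightarrow> real" where
  "hist_prob k h = measure M (hist_event k h)"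

lemma hist_event_eq: "hist_event k h = {\<omega>\<in>space M. \<forall>i\<in>{1..k}. \<sigma> i \<omega> = h i}"
  unfolding hist_event_def past_event_def by (simp add: atLeastLessThanSuc_atLeastAtMost)

lemma hist_event_0: "hist_event 0 h = space M"
  by (simp add: hist_event_eq)

lemma hist_event_Suc: "hist_event (Suc k) h = {\<omega>\<in>hist_event k h. \<sigma> (Suc k) \<omega> = h (Suc k)}"
  unfolding hist_event_eq by (simp add: atLeastAtMostSuc_conv) blast

lemma hist_event_cong: "(\<And>i. i \<in> {1..k} \<Longrightarrow> h i = h' i) \<Longrightarrow> hist_event k h = hist_event k h'"
  unfolding hist_event_eq by auto

lemma hist_event_antimono: "j \<le> k \<Longrightarrow> hist_event k h \<subseteq> hist_event j h"
  unfolding hist_event_eq by auto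

lemma switch_event_sets: "S \<in> sets M \<Longrightarrow> m \<ge> 1 \<Longrightarrow> {\<omega>\<in>S. \<sigma> m \<omega> = s} \<in> sets M"
proof -
  assume S: "S \<in> sets M" and m: "m \<ge> 1"
  have "{\<omega>\<in>S. \<sigma> m \<omega> = s} = S \<inter> (\<sigma> m -` {s} \<inter> space M)"
    using sets.sets_into_space[OF S] by auto
  moreover have "\<sigma> m -` {s} \<inter> space M \<in> sets M"
    using measurable_sets[OF measurable_switch[OF m]] by simp
  ultimately show ?thesis using S by auto
qed

lemma hist_event_sets: "hist_event k h \<in> sets M"
  by (induction k) (simp_all add: hist_event_0 hist_event_Suc switch_event_sets)

lemma hist_prob_antimono: "j \<le> k \<Longrightarrow> hist_prob k h \<le> hist_prob j h"
  unfolding hist_prob_def by (intro finite_measure_mono hist_event_antimono hist_event_sets)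

lemma hist_prob_cong: "(\<And>i. i \<in> {1..k} \<Longrightarrow> h i = h' i) \<Longrightarrow> hist_prob k h = hist_prob k h'"
  unfolding hist_prob_def using hist_event_cong by metis

lemma exists_positive_switch:
  assumes S: "S \<in> sets M" and pos: "measure M S > 0" and m: "m \<ge> 1"
  shows "\<exists>s. measure M {\<omega>\<in>S. \<sigma> m \<omega> = s} > 0"
proof (rule ccontr)
  assume "\<nexists>s. measure M {\<omega>\<in>S. \<sigma> m \<omega> = s} > 0"
  then have zero: "\<And>s. measure M {\<omega>\<in>S. \<sigma> m \<omega> = s} \<le> 0" by (meson not_less)
  have "S = (\<Union>s. {\<omega>\<in>S. \<sigma> m \<omega> = s})" by auto
  then have "measure M S \<le> (\<Sum>s\<in>UNIV. measure M {\<omega>\<in>S. \<sigma> m \<omega> = s})"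
    using finite_measure_subadditive_finite[of UNIV "\<lambda>s. {\<omega>\<in>S. \<sigma> m \<omega> = s}"] switch_event_sets[OF S m]
    by auto
  also have "\<dots> \<le> 0" using zero by (simp add: sum_nonpos)
  finally show False using pos by simp
qed

definition history :: "nat \<Rightarrow> 'a \<Rightarrow> nat \<Rightarrow> 'n set" where
  "history n \<omega> = restrict (\<lambda>i. \<sigma> i \<omega>) {1..n}"

lemma history_in_histories: "history n \<omega> \<in> histories n"
  unfolding history_def by (rule restrict_in_histories)

lemma in_hist_event_history: "\<omega> \<in> space M \<Longrightarrow> \<omega> \<in> hist_event n (history n \<omega>)"
  by (simp add: hist_event_eq history_def)

lemma hist_event_disjoint:
  assumes "h \<in> histories n" "h' \<in> histories n" "h \<noteq> h'"
  shows "hist_event n h \<inter> hist_event n h' = {}"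
proof (rule ccontr)
  assume "hist_event n h \<inter> hist_event n h' \<noteq> {}"
  then have "\<And>i. i \<in> {1..n} \<Longrightarrow> h i = h' i" unfolding hist_event_eq by auto
  then show False using histories_eqI assms by blast
qed

lemma hist_event_eq_UN_extensions:
  assumes h: "h \<in> histories k"
  shows "hist_event k h = (\<Union>h'\<in>extensions k d h. hist_event (k + d) h')"
proof
  show "hist_event k h \<subseteq> (\<Union>h'\<in>extensions k d h. hist_event (k + d) h')"
  proof
    fix \<omega> assume \<omega>: "\<omega> \<in> hist_event k h"
    then have "history (k + d) \<omega> \<in> extensions k d h"
      using restrict_in_extensions[OF h, of "\<lambda>i. \<sigma> i \<omega>" d]
      by (simp add: hist_event_eq history_def)
    moreover have "\<omega> \<in> hist_event (k + d) (history (k + d) \<omega>)"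
      using \<omega> in_hist_event_history by (simp add: hist_event_eq)
    ultimately show "\<omega> \<in> (\<Union>h'\<in>extensions k d h. hist_event (k + d) h')" by blast
  qed
  show "(\<Union>h'\<in>extensions k d h. hist_event (k + d) h') \<subseteq> hist_event k h"
  proof
    fix \<omega> assume "\<omega> \<in> (\<Union>h'\<in>extensions k d h. hist_event (k + d) h')"
    then obtain h' where h': "h' \<in> extensions k d h" "\<omega> \<in> hist_event (k + d) h'" by blast
    have "\<sigma> i \<omega> = h i" if "i \<in> {1..k}" for i
      using that h'(2) extensions_agree[OF h'(1) that] unfolding hist_event_eq by auto
    then show "\<omega> \<in> hist_event k h" using h'(2) unfolding hist_event_eq by auto
  qed
qed

lemma hist_prob_sum_extensions:
  assumes h: "h \<in> histories k"
  shows "(\<Sum>h'\<in>extensions k d h. hist_prob (k + d) h') = hist_prob k h"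
proof -
  have "disjoint_family_on (hist_event (k + d)) (extensions k d h)"
    unfolding disjoint_family_on_def using hist_event_disjoint by (auto simp: extensions_def)
  then have "measure M (\<Union>h'\<in>extensions k d h. hist_event (k + d) h')
      = (\<Sum>h'\<in>extensions k d h. hist_prob (k + d) h')"
    unfolding hist_prob_def
    by (intro measure_finite_Union finite_extensions) (auto simp: hist_event_sets)
  then show ?thesis using hist_event_eq_UN_extensions[OF h] by (simp add: hist_prob_def)
qed

text \<open>Capped at 1 so that the contraction rate \<rho> below is nonnegative.\<close>
definition \<beta> :: real where "\<beta> = min \<alpha> 1"

lemma beta_pos: "0 < \<beta>" and beta_le_one: "\<beta> \<le> 1"
  using alpha_pos by (auto simp: \<beta>_def)

lemma hist_prob_Suc_ge:
  assumes pos: "hist_prob (Suc k) h > 0"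
  shows "\<beta> * hist_prob k h \<le> hist_prob (Suc k) h"
proof -
  have cp: "cond_prob M \<sigma> (Suc k) h (Suc k) (h (Suc k)) = hist_prob (Suc k) h / hist_prob k h"
    unfolding cond_prob_def hist_prob_def hist_event_Suc[of k h] by (simp add: hist_event_def)
  have "hist_prob k h > 0"
    using pos hist_prob_antimono[of k "Suc k" h] by simp
  then have "cond_prob M \<sigma> (Suc k) h (Suc k) (h (Suc k)) \<noteq> 0" using cp pos by simp
  then have "\<alpha> \<le> hist_prob (Suc k) h / hist_prob k h"
    using cond_prob_ge[rule_format, of "Suc k" h "h (Suc k)"] cp by simp
  then have "\<alpha> * hist_prob k h \<le> hist_prob (Suc k) h"
    using \<open>hist_prob k h > 0\<close> by (simp add: pos_le_divide_eq)
  moreover have "\<beta> * hist_prob k h \<le> \<alpha> * hist_prob k h"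
    using \<open>hist_prob k h > 0\<close> by (intro mult_right_mono) (auto simp: \<beta>_def)
  ultimately show ?thesis by simp
qed

lemma extension_prob_ge:
  assumes agree: "\<forall>i\<in>{1..k}. h' i = h i" and "k \<le> m" and "hist_prob m h' > 0"
  shows "\<beta>^(m - k) * hist_prob k h \<le> hist_prob m h'"
  using \<open>k \<le> m\<close> \<open>hist_prob m h' > 0\<close>
proof (induction m rule: dec_induct)
  case base
  then show ?case using hist_prob_cong[of k h' h] agree by simp
next
  case (step m)
  have "hist_prob m h' > 0"
    using step hist_prob_antimono[of m "Suc m" h'] by simp
  then have "\<beta>^(Suc m - k) * hist_prob k h \<le> \<beta> * hist_prob m h'"
    using step beta_pos by (simp add: Suc_diff_le)
  also have "\<dots> \<le> hist_prob (Suc m) h'" using hist_prob_Suc_ge step by simp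
  finally show ?case .
qed

lemma positive_extension_with_value:
  assumes "measure M {\<omega>\<in>hist_event k h. \<sigma> (k + Suc d) \<omega> = s} > 0"
  shows "\<exists>h'. (\<forall>i\<in>{1..k}. h' i = h i) \<and> h' (k + Suc d) = s \<and> hist_prob (k + Suc d) h' > 0"
  using assms
proof (induction d arbitrary: k h)
  case 0
  let ?h = "h(Suc k := s)"
  have "{\<omega>\<in>hist_event k h. \<sigma> (k + Suc 0) \<omega> = s} = hist_event (Suc k) ?h"
    unfolding hist_event_Suc using hist_event_cong[of k h ?h] by auto
  then have "hist_prob (Suc k) ?h > 0" using 0 by (simp add: hist_prob_def)
  moreover have "\<forall>i\<in>{1..k}. ?h i = h i" "?h (Suc k) = s" by simp_all
  ultimately show ?case unfolding add_Suc_right add_0_right by blast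
next
  case (Suc d)
  let ?S = "{\<omega>\<in>hist_event k h. \<sigma> (k + Suc (Suc d)) \<omega> = s}"
  have "?S \<in> sets M" by (intro switch_event_sets hist_event_sets) simp
  then obtain s' where s': "measure M {\<omega>\<in>?S. \<sigma> (Suc k) \<omega> = s'} > 0"
    using exists_positive_switch[OF _ Suc.prems, of "Suc k"] by auto
  let ?h = "h(Suc k := s')"
  have "{\<omega>\<in>?S. \<sigma> (Suc k) \<omega> = s'} = {\<omega>\<in>hist_event (Suc k) ?h. \<sigma> (Suc k + Suc d) \<omega> = s}"
    unfolding hist_event_Suc using hist_event_cong[of k h ?h] by auto
  then have "measure M {\<omega>\<in>hist_event (Suc k) ?h. \<sigma> (Suc k + Suc d) \<omega> = s} > 0"
    using s' by simp
  then obtain h' where "\<forall>i\<in>{1..Suc k}. h' i = ?h i" "h' (Suc k + Suc d) = s"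
      "hist_prob (Suc k + Suc d) h' > 0"
    using Suc.IH by blast
  then show ?case by (intro exI[of _ h']) auto
qed

lemma positive_extension:
  assumes "hist_prob k h > 0"
  shows "\<exists>h'. (\<forall>i\<in>{1..k}. h' i = h i) \<and> hist_prob (k + d) h' > 0"
proof (cases d)
  case 0
  then show ?thesis using assms by auto
next
  case (Suc d')
  have "measure M (hist_event k h) > 0" using assms by (simp add: hist_prob_def)
  then obtain s where "measure M {\<omega>\<in>hist_event k h. \<sigma> (k + Suc d') \<omega> = s} > 0"
    using exists_positive_switch[OF hist_event_sets, of k h "k + Suc d'"] by auto
  then show ?thesis using positive_extension_with_value Suc by blast
qed

section \<open>Continuations along which the root reaches every node\<close>

lemma extension_switching_node:
  assumes pos: "hist_prob k h > 0"
  shows "\<exists>w h'. w < q \<and> (\<forall>i\<in>{1..k}. h' i = h i) \<and> v \<in> h' (k + Suc w)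
           \<and> \<beta>^Suc w * hist_prob k h \<le> hist_prob (k + Suc w) h'"
proof -
  have "measure M (past_event M \<sigma> (Suc k) h) \<noteq> 0"
    using pos by (simp add: hist_prob_def hist_event_def)
  then have "v \<in> (\<Union>w\<in>{0..<q}. \<Union>{s. cond_prob M \<sigma> (Suc k) h (Suc k + w) s \<noteq> 0})"
    using all_switched_within_q[rule_format, of "Suc k" h] by simp
  then obtain w s where w: "w < q" "v \<in> s" "cond_prob M \<sigma> (Suc k) h (Suc k + w) s \<noteq> 0"
    by auto
  then have "measure M {\<omega>\<in>hist_event k h. \<sigma> (k + Suc w) \<omega> = s} \<noteq> 0"
    unfolding cond_prob_def hist_event_def by auto
  then have "measure M {\<omega>\<in>hist_event k h. \<sigma> (k + Suc w) \<omega> = s} > 0"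
    using measure_nonneg[of M] by (simp add: order_less_le)
  then obtain h' where h': "\<forall>i\<in>{1..k}. h' i = h i" "h' (k + Suc w) = s"
      "hist_prob (k + Suc w) h' > 0"
    using positive_extension_with_value by blast
  then have "\<beta>^Suc w * hist_prob k h \<le> hist_prob (k + Suc w) h'"
    using extension_prob_ge[of k h' h "k + Suc w"] by simp
  then show ?thesis using w h' by blast
qed

text \<open>The root has an edge leaving the reached set, and by (c) its target switches within q steps.\<close>
lemma extension_reach_grows:
  assumes pos: "hist_prob (k + t) h > 0" and not_all: "reach A r (\<lambda>i. h (k + i)) t \<noteq> UNIV"
  shows "\<exists>w h'. w < q \<and> (\<forall>i\<in>{1..k + t}. h' i = h i)
     \<and> reach A r (\<lambda>i. h (k + i)) t \<subset> reach A r (\<lambda>i. h' (k + i)) (Suc (t + w))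
     \<and> \<beta>^Suc w * hist_prob (k + t) h \<le> hist_prob (k + Suc (t + w)) h'"
proof -
  let ?R = "reach A r (\<lambda>i. h (k + i)) t"
  obtain v j where vj: "v \<notin> ?R" "j \<in> ?R" "A$v$j > 0"
    using root_edge_leaving[OF root root_in_reach not_all] by blast
  obtain w h' where w: "w < q" and h': "\<forall>i\<in>{1..k + t}. h' i = h i"
      and v: "v \<in> h' (k + t + Suc w)"
      and bound: "\<beta>^Suc w * hist_prob (k + t) h \<le> hist_prob (k + t + Suc w) h'"
    using extension_switching_node[OF pos] by blast
  let ?R' = "reach A r (\<lambda>i. h' (k + i))"
  have "?R' t = ?R" by (rule reach_cong) (use h' in auto)
  moreover have "?R' t \<subseteq> ?R' (t + w)" by (rule reach_mono) simp
  ultimately have "insert v ?R \<subseteq> ?R' (Suc (t + w))"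
    using v vj by (auto simp: add.assoc)
  then have "?R \<subset> ?R' (Suc (t + w))" using vj(1) by blast
  moreover have "\<beta>^Suc w * hist_prob (k + t) h \<le> hist_prob (k + Suc (t + w)) h'"
    using bound by (simp add: add.assoc)
  ultimately show ?thesis using w h' by blast
qed

lemma extension_reach_card:
  assumes pos: "hist_prob k h > 0"
  shows "\<exists>t h'. t \<le> c * q \<and> (\<forall>i\<in>{1..k}. h' i = h i) \<and> \<beta>^t * hist_prob k h \<le> hist_prob (k + t) h'
     \<and> (c < card (reach A r (\<lambda>i. h' (k + i)) t) \<or> reach A r (\<lambda>i. h' (k + i)) t = UNIV)"
proof (induction c)
  case 0
  then show ?case by (intro exI[of _ 0] exI[of _ h]) auto
next
  case (Suc c)
  then obtain t h' where t: "t \<le> c * q" and h': "\<forall>i\<in>{1..k}. h' i = h i"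
      and bound: "\<beta>^t * hist_prob k h \<le> hist_prob (k + t) h'"
      and card: "c < card (reach A r (\<lambda>i. h' (k + i)) t) \<or> reach A r (\<lambda>i. h' (k + i)) t = UNIV"
    by blast
  show ?case
  proof (cases "reach A r (\<lambda>i. h' (k + i)) t = UNIV")
    case True
    then show ?thesis using t h' bound by (intro exI[of _ t] exI[of _ h']) auto
  next
    case False
    have "hist_prob (k + t) h' > 0"
      using pos beta_pos by (intro order_less_le_trans[OF _ bound]) simp
    then obtain w h'' where w: "w < q" and h'': "\<forall>i\<in>{1..k + t}. h'' i = h' i"
        and grows: "reach A r (\<lambda>i. h' (k + i)) t \<subset> reach A r (\<lambda>i. h'' (k + i)) (Suc (t + w))"
        and bound': "\<beta>^Suc w * hist_prob (k + t) h' \<le> hist_prob (k + Suc (t + w)) h''"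
      using extension_reach_grows[OF _ False] by blast
    have "Suc c < card (reach A r (\<lambda>i. h'' (k + i)) (Suc (t + w)))"
      using psubset_card_mono[OF finite grows] card False by simp
    moreover have "Suc (t + w) \<le> Suc c * q" using t w by simp
    moreover have "\<beta>^Suc (t + w) * hist_prob k h \<le> hist_prob (k + Suc (t + w)) h''"
    proof -
      have "\<beta>^Suc (t + w) * hist_prob k h = \<beta>^Suc w * (\<beta>^t * hist_prob k h)"
        by (simp add: power_add)
      also have "\<dots> \<le> \<beta>^Suc w * hist_prob (k + t) h'"
        using bound beta_pos by (simp add: mult_left_mono)
      also have "\<dots> \<le> hist_prob (k + Suc (t + w)) h''" by (rule bound')
      finally show ?thesis .
    qed
    moreover have "\<forall>i\<in>{1..k}. h'' i = h i" using h' h'' by auto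
    ultimately show ?thesis by blast
  qed
qed

definition L :: nat where "L = CARD('n) * q"

lemma L_pos: "L > 0" using q_pos by (simp add: L_def)

lemma extension_reach_all:
  assumes pos: "hist_prob k h > 0"
  shows "\<exists>h'. (\<forall>i\<in>{1..k}. h' i = h i) \<and> \<beta>^L * hist_prob k h \<le> hist_prob (k + L) h'
     \<and> reach A r (\<lambda>i. h' (k + i)) L = UNIV"
proof -
  obtain t h' where t: "t \<le> L" and h': "\<forall>i\<in>{1..k}. h' i = h i"
      and bound: "\<beta>^t * hist_prob k h \<le> hist_prob (k + t) h'"
      and card: "CARD('n) < card (reach A r (\<lambda>i. h' (k + i)) t) \<or> reach A r (\<lambda>i. h' (k + i)) t = UNIV"
    using extension_reach_card[OF pos, of "CARD('n)"] unfolding L_def by blast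
  have all: "reach A r (\<lambda>i. h' (k + i)) t = UNIV"
    using card card_mono[of UNIV "reach A r (\<lambda>i. h' (k + i)) t"] by auto
  have "hist_prob (k + t) h' > 0"
    using pos beta_pos by (intro order_less_le_trans[OF _ bound]) simp
  then obtain h'' where h'': "\<forall>i\<in>{1..k + t}. h'' i = h' i" "hist_prob (k + L) h'' > 0"
    using positive_extension[of "k + t" h' "L - t"] t by (metis le_add_diff_inverse add.assoc)
  have "\<beta>^L * hist_prob k h = \<beta>^(L - t) * (\<beta>^t * hist_prob k h)"
    using t by (simp add: power_add[symmetric])
  also have "\<dots> \<le> \<beta>^(L - t) * hist_prob (k + t) h'"
    using bound beta_pos by (simp add: mult_left_mono)
  also have "\<dots> \<le> hist_prob (k + L) h''"
    using extension_prob_ge[OF h''(1), of "k + L"] h''(2) t by simp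
  finally have "\<beta>^L * hist_prob k h \<le> hist_prob (k + L) h''" .
  moreover have "reach A r (\<lambda>i. h'' (k + i)) t = UNIV"
    using all reach_cong[of t "\<lambda>i. h'' (k + i)" "\<lambda>i. h' (k + i)"] h''(1) by auto
  then have "reach A r (\<lambda>i. h'' (k + i)) L = UNIV"
    using reach_mono[OF t] by blast
  moreover have "\<forall>i\<in>{1..k}. h'' i = h i" using h' h'' by auto
  ultimately show ?thesis by blast
qed

section \<open>Geometric decay of the expected spread\<close>

definition mean_spread :: "real^'n \<Rightarrow> nat \<Rightarrow> real" where
  "mean_spread x1 k = (\<Sum>h\<in>histories k. hist_prob k h * spread (run A h x1 k))"

lemma mean_spread_nonneg: "0 \<le> mean_spread x1 k"
  unfolding mean_spread_def hist_prob_def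
  by (intro sum_nonneg mult_nonneg_nonneg measure_nonneg spread_nonneg)

lemma mean_spread_split:
  "mean_spread x1 (k + d) =
     (\<Sum>h\<in>histories k. \<Sum>h'\<in>extensions k d h. hist_prob (k + d) h' * spread (run A h' x1 (k + d)))"
proof -
  have "(\<lambda>h'. restrict h' {1..k}) ` histories (k + d) \<subseteq> histories k"
    using restrict_in_histories by blast
  from sum.group[OF finite_histories finite_histories this, symmetric] show ?thesis
    unfolding mean_spread_def extensions_def by simp
qed

lemma run_extension:
  assumes "h' \<in> extensions k d h"
  shows "run A h' x1 (k + d) = run A (\<lambda>i. h' (k + i)) (run A h x1 k) d"
proof -
  have "run A h' x1 k = run A h x1 k" by (rule run_cong) (use extensions_agree[OF assms] in auto)
  then show ?thesis by (simp add: run_add)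
qed

lemma extensions_spread_le:
  assumes h: "h \<in> histories k"
  shows "(\<Sum>h'\<in>extensions k d h. hist_prob (k + d) h' * spread (run A h' x1 (k + d)))
    \<le> hist_prob k h * spread (run A h x1 k)"
proof -
  have "(\<Sum>h'\<in>extensions k d h. hist_prob (k + d) h' * spread (run A h' x1 (k + d)))
      \<le> (\<Sum>h'\<in>extensions k d h. hist_prob (k + d) h' * spread (run A h x1 k))"
    using run_extension run_spread_le[OF row_stochastic]
    by (intro sum_mono mult_left_mono measure_nonneg) (auto simp: hist_prob_def)
  also have "\<dots> = hist_prob k h * spread (run A h x1 k)"
    using hist_prob_sum_extensions[OF h] by (simp add: sum_distrib_right[symmetric])
  finally show ?thesis .
qed

lemma extensions_spread_le_reaching:
  assumes h: "h \<in> histories k" and h0: "h0 \<in> extensions k d h"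
    and all: "reach A r (\<lambda>i. h0 (k + i)) d = UNIV"
  shows "(\<Sum>h'\<in>extensions k d h. hist_prob (k + d) h' * spread (run A h' x1 (k + d)))
    \<le> spread (run A h x1 k) * (hist_prob k h - min_pos_entry A ^ d * hist_prob (k + d) h0)"
proof -
  let ?s = "spread (run A h x1 k)"
  let ?f = "\<lambda>h'. hist_prob (k + d) h' * spread (run A h' x1 (k + d))"
  have "?f h0 \<le> hist_prob (k + d) h0 * ((1 - min_pos_entry A ^ d) * ?s)"
    using run_spread_contract[OF row_stochastic root_loop all] run_extension[OF h0]
    by (intro mult_left_mono) (simp_all add: hist_prob_def)
  moreover have "(\<Sum>h'\<in>extensions k d h - {h0}. ?f h') \<le> (\<Sum>h'\<in>extensions k d h - {h0}. hist_prob (k + d) h' * ?s)"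
    using run_extension run_spread_le[OF row_stochastic]
    by (intro sum_mono mult_left_mono) (auto simp: hist_prob_def)
  moreover have "(\<Sum>h'\<in>extensions k d h - {h0}. hist_prob (k + d) h' * ?s) = (hist_prob k h - hist_prob (k + d) h0) * ?s"
    using sum.remove[OF finite_extensions h0, of "hist_prob (k + d)"] hist_prob_sum_extensions[OF h]
    by (simp add: sum_distrib_right[symmetric])
  ultimately show ?thesis
    using sum.remove[OF finite_extensions h0, of ?f] by (simp add: algebra_simps)
qed

definition \<rho> :: real where "\<rho> = 1 - (min_pos_entry A * \<beta>)^L"

lemma rho_nonneg: "0 \<le> \<rho>" and rho_less_one: "\<rho> < 1"
proof -
  have "0 < min_pos_entry A" "min_pos_entry A \<le> 1"
    using min_pos_entry_pos[OF root_loop] min_pos_entry_le_one[OF row_stochastic root_loop] by auto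
  then have "0 < (min_pos_entry A * \<beta>)^L" "(min_pos_entry A * \<beta>)^L \<le> 1"
    using beta_pos beta_le_one by (auto intro!: power_le_one mult_le_one)
  then show "0 \<le> \<rho>" "\<rho> < 1" by (auto simp: \<rho>_def)
qed

lemma extensions_spread_contract:
  assumes h: "h \<in> histories k"
  shows "(\<Sum>h'\<in>extensions k L h. hist_prob (k + L) h' * spread (run A h' x1 (k + L)))
    \<le> \<rho> * (hist_prob k h * spread (run A h x1 k))"
proof (cases "hist_prob k h > 0")
  case False
  then have "hist_prob k h = 0" using measure_nonneg[of M] by (simp add: hist_prob_def order_less_le)
  then show ?thesis using extensions_spread_le[OF h, of L x1] by simp
next
  case True
  let ?s = "spread (run A h x1 k)" and ?a = "min_pos_entry A"
  obtain h0 where h0: "\<forall>i\<in>{1..k}. h0 i = h i" and bound: "\<beta>^L * hist_prob k h \<le> hist_prob (k + L) h0"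
      and all: "reach A r (\<lambda>i. h0 (k + i)) L = UNIV"
    using extension_reach_all[OF True] by blast
  define hs where "hs = restrict h0 {1..k + L}"
  have hs: "hs \<in> extensions k L h"
    unfolding hs_def by (rule restrict_in_extensions[OF h]) (use h0 in auto)
  have "hist_prob (k + L) hs = hist_prob (k + L) h0"
    by (rule hist_prob_cong) (simp add: hs_def)
  then have bound': "\<beta>^L * hist_prob k h \<le> hist_prob (k + L) hs" using bound by simp
  have "reach A r (\<lambda>i. hs (k + i)) L = UNIV"
    using all reach_cong[of L "\<lambda>i. hs (k + i)" "\<lambda>i. h0 (k + i)"] by (simp add: hs_def)
  then have "(\<Sum>h'\<in>extensions k L h. hist_prob (k + L) h' * spread (run A h' x1 (k + L)))
      \<le> ?s * (hist_prob k h - ?a ^ L * hist_prob (k + L) hs)"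
    by (rule extensions_spread_le_reaching[OF h hs])
  also have "\<dots> \<le> ?s * (hist_prob k h - ?a ^ L * (\<beta>^L * hist_prob k h))"
    using bound' min_pos_entry_pos[OF root_loop] spread_nonneg
    by (intro mult_left_mono diff_left_mono) simp_all
  also have "\<dots> = \<rho> * (hist_prob k h * ?s)"
    by (simp add: \<rho>_def algebra_simps power_mult_distrib)
  finally show ?thesis .
qed

lemma mean_spread_antimono: "mean_spread x1 (k + d) \<le> mean_spread x1 k"
  unfolding mean_spread_split by (unfold mean_spread_def) (intro sum_mono extensions_spread_le)

lemma mean_spread_contract: "mean_spread x1 (k + L) \<le> \<rho> * mean_spread x1 k"
  unfolding mean_spread_split
  by (unfold mean_spread_def sum_distrib_left) (intro sum_mono extensions_spread_contract)

lemma mean_spread_tendsto_zero: "(\<lambda>k. mean_spread x1 k) \<longlonglongrightarrow> 0"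
proof -
  have pow: "mean_spread x1 (j * L) \<le> \<rho>^j * mean_spread x1 0" for j
  proof (induction j)
    case (Suc j)
    have "mean_spread x1 (Suc j * L) \<le> \<rho> * mean_spread x1 (j * L)"
      using mean_spread_contract[of x1 "j * L"] by (simp add: add.commute)
    also have "\<dots> \<le> \<rho> * (\<rho>^j * mean_spread x1 0)"
      using Suc rho_nonneg by (intro mult_left_mono)
    finally show ?case by simp
  qed simp
  have bound: "mean_spread x1 k \<le> \<rho>^(k div L) * mean_spread x1 0" for k
    using order_trans[OF mean_spread_antimono[of x1 "k div L * L" "k mod L"] pow[of "k div L"]]
    by (simp only: div_mult_mod_eq)
  have "(\<lambda>k. \<rho>^(k div L)) \<longlonglongrightarrow> 0"
    using LIMSEQ_power_zero[of \<rho>] rho_nonneg rho_less_one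
    by (intro filterlim_compose[OF _ filterlim_at_top_div_const_nat[OF L_pos]]) simp
  then have "(\<lambda>k. \<rho>^(k div L) * mean_spread x1 0) \<longlonglongrightarrow> 0"
    by (rule tendsto_mult_left_zero)
  from tendsto_sandwich[OF _ _ tendsto_const this] show ?thesis
    using mean_spread_nonneg bound by auto
qed

lemma traj_eq_run_history: "traj A \<sigma> x1 k \<omega> = run A (history k \<omega>) x1 k"
  unfolding traj_eq_run by (rule run_cong) (simp add: history_def)

text \<open>Markov's inequality for the spread, whose square bounds the disagreement.\<close>
lemma prob_disagreement_ge_le:
  assumes "\<epsilon> > 0"
  shows "measure M {\<omega> \<in> space M. disagreement (traj A \<sigma> x1 k \<omega>) \<ge> \<epsilon>}
    \<le> mean_spread x1 k / sqrt (\<epsilon> / CARD('n))"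
proof -
  define \<delta> where "\<delta> = sqrt (\<epsilon> / CARD('n))"
  have "\<delta> > 0" using assms by (simp add: \<delta>_def)
  let ?G = "{h \<in> histories k. \<delta> \<le> spread (run A h x1 k)}"
  have fin: "finite ?G" by (rule finite_subset[OF _ finite_histories]) auto
  have "{\<omega> \<in> space M. disagreement (traj A \<sigma> x1 k \<omega>) \<ge> \<epsilon>} \<subseteq> (\<Union>h\<in>?G. hist_event k h)"
  proof
    fix \<omega> assume \<omega>: "\<omega> \<in> {\<omega> \<in> space M. disagreement (traj A \<sigma> x1 k \<omega>) \<ge> \<epsilon>}"
    let ?h = "history k \<omega>"
    have "\<epsilon> \<le> real CARD('n) * (spread (run A ?h x1 k))^2"
      using \<omega> disagreement_le_spread[of "run A ?h x1 k"] by (auto simp: traj_eq_run_history)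
    then have "\<epsilon> / CARD('n) \<le> (spread (run A ?h x1 k))^2" by (simp add: divide_le_eq mult.commute)
    then have "\<delta> \<le> sqrt ((spread (run A ?h x1 k))^2)" unfolding \<delta>_def by (rule real_sqrt_le_mono)
    then have "\<delta> \<le> spread (run A ?h x1 k)" using spread_nonneg[of "run A ?h x1 k"] by simp
    then show "\<omega> \<in> (\<Union>h\<in>?G. hist_event k h)"
      using \<omega> in_hist_event_history history_in_histories by blast
  qed
  then have "measure M {\<omega> \<in> space M. disagreement (traj A \<sigma> x1 k \<omega>) \<ge> \<epsilon>}
      \<le> measure M (\<Union>h\<in>?G. hist_event k h)"
    using fin by (intro finite_measure_mono sets.finite_UN hist_event_sets) auto
  also have "\<dots> \<le> (\<Sum>h\<in>?G. hist_prob k h)"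
    unfolding hist_prob_def using fin by (intro measure_UNION_le hist_event_sets) auto
  also have "\<dots> \<le> (\<Sum>h\<in>?G. hist_prob k h * spread (run A h x1 k) / \<delta>)"
    using \<open>\<delta> > 0\<close> by (intro sum_mono) (auto simp: le_divide_eq hist_prob_def intro: mult_left_mono)
  also have "\<dots> \<le> (\<Sum>h\<in>histories k. hist_prob k h * spread (run A h x1 k) / \<delta>)"
    using finite_histories \<open>\<delta> > 0\<close>
    by (intro sum_mono2) (auto simp: hist_prob_def intro!: divide_nonneg_pos mult_nonneg_nonneg spread_nonneg)
  also have "\<dots> = mean_spread x1 k / \<delta>" by (simp add: mean_spread_def sum_divide_distrib)
  finally show ?thesis by (simp add: \<delta>_def)
qed

theorem consensus:
  "\<forall>\<epsilon>>0. (\<lambda>k. measure M {\<omega> \<in> space M. disagreement (traj A \<sigma> x1 k \<omega>) \<ge> \<epsilon>}) \<longlonglongrightarrow> 0"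
proof (intro allI impI)
  fix \<epsilon> :: real assume "\<epsilon> > 0"
  have "(\<lambda>k. mean_spread x1 k / sqrt (\<epsilon> / CARD('n))) \<longlonglongrightarrow> 0"
    by (rule tendsto_divide_zero[OF mean_spread_tendsto_zero])
  from tendsto_sandwich[OF _ _ tendsto_const this]
  show "(\<lambda>k. measure M {\<omega> \<in> space M. disagreement (traj A \<sigma> x1 k \<omega>) \<ge> \<epsilon>}) \<longlonglongrightarrow> 0"
    using prob_disagreement_ge_le[OF \<open>\<epsilon> > 0\<close>] by auto
qed

end

theorem corollary1:
  fixes A :: "real^'n^'n"
    and M :: "'a measure"
    and \<sigma> :: "nat \<Rightarrow> 'a \<Rightarrow> 'n set"
    and x1 :: "real^'n"
  assumes "prob_space M"
    and "\<And>k. k \<ge> 1 \<Longrightarrow> \<sigma> k \<in> M \<rightarrow>\<^sub>M count_space UNIV"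
    and "row_stochastic A"
    and "rooted A" and "\<exists>r\<in>roots A. A$r$r > 0"
    and "\<alpha> > 0"
    and "\<forall>k\<ge>1. \<forall>h s. cond_prob M \<sigma> k h k s \<noteq> 0 \<longrightarrow> cond_prob M \<sigma> k h k s \<ge> \<alpha>"
    and "(q::nat) > 0"
    and "\<forall>k\<ge>1. \<forall>h. measure M (past_event M \<sigma> k h) \<noteq> 0 \<longrightarrow>
           (\<Union>w\<in>{0..<q}. \<Union>{s. cond_prob M \<sigma> k h (k + w) s \<noteq> 0}) = UNIV"
  shows "\<forall>\<epsilon>>0. ((\<lambda>k. measure M {\<omega> \<in> space M. disagreement (traj A \<sigma> x1 k \<omega>) \<ge> \<epsilon>})
            \<longlonglongrightarrow> 0)"
proof -
  obtain r where "r \<in> roots A" "A$r$r > 0" using assms(5) by blast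
  then interpret switched_consensus M A \<sigma> \<alpha> q r
    using assms by (intro switched_consensus.intro switched_consensus_axioms.intro) simp_all
  show ?thesis by (rule consensus)
qed

end
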